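(* For real $p\neq 0$, the inequality $\left( \frac{\sinh x}{x}\right) ^{2p}+\left( \frac{\tanh x}{x}\right) ^{p}>2$ holds for all $x\in(0,\infty)$ if and only if $p>0$ or $p\leq -3/5$. *)

theory Defs
  imports Complex_Main
begin

end

theory Submission
  imports Defs "HOL-Real_Asymp.Real_Asymp" "HOL-Analysis.Convex"
begin

text \<open>
  Let F p x = (sinh x / x) powr (2 p) + (tanh x / x) powr p, which tends to 2 as x -> 0+.
  For -3/5 < p < 0 the expansion F p x = 2 + p (3 + 5 p) x^4 / 45 + o(x^4) makes F p x < 2
  near 0. For p > 0, Lazarevic's inequality sinh^3 x > x^3 cosh x says (sinh x / x)^2 > x / tanh x,
  so F p x > 1/w + w >= 2 with w = (tanh x / x) powr p. The function F (-3/5) is strictly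
  increasing: raising the two terms of its derivative to the fifth power clears the fractional
  exponents and leaves an inequality between hyperbolic polynomials. Hence F (-3/5) > 2, and for
  p < -3/5 the concavity of u powr l with l = -3/(5 p) gives 2 < F (-3/5) x <= l F p x + 2 (1 - l).

  Both hyperbolic inequalities read f t + f (-t) > 0 for an exponential polynomial
  f t = (SUM a t^j e^(k t)) whose derivatives of even order at 0 are all nonnegative: below some
  order N this is checked by evaluation, beyond N the terms with the largest |k| dominate.
\<close>

fun falling_fact :: "int \<Rightarrow> nat \<Rightarrow> int" where
  "falling_fact x 0 = 1"
| "falling_fact x (Suc j) = x * falling_fact (x - 1) j"

lemma falling_fact_of_nat_mult_fact:
  "j \<le> n \<Longrightarrow> falling_fact (int n) j * fact (n - j) = fact n"
proof (induction j arbitrary: n)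
  case 0
  then show ?case by simp
next
  case (Suc j)
  then obtain m where "n = Suc m" "j \<le> m"
    by (cases n) auto
  with Suc.IH[of m] show ?case
    by (simp add: algebra_simps)
qed

lemma falling_fact_of_nat_bounds:
  "j \<le> n \<Longrightarrow> 0 \<le> falling_fact (int n) j \<and> falling_fact (int n) j \<le> int n ^ j"
proof (induction j arbitrary: n)
  case 0
  then show ?case by simp
next
  case (Suc j)
  then obtain m where n: "n = Suc m" and "j \<le> m"
    by (cases n) auto
  have "0 \<le> falling_fact (int m) j" "falling_fact (int m) j \<le> int m ^ j"
    using Suc.IH[of m] \<open>j \<le> m\<close> by auto
  moreover have "int m ^ j \<le> int n ^ j"
    by (simp add: n power_mono)
  ultimately show ?case
    by (simp add: n)
qed

text \<open>A triple (a, j, k) stands for the term a t^j e^(k t).\<close>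

type_synonym exp_poly = "(int \<times> nat \<times> int) list"

definition eval_exp_poly :: "exp_poly \<Rightarrow> real \<Rightarrow> real" where
  "eval_exp_poly ps t = (\<Sum>(a, j, k)\<leftarrow>ps. of_int a * t ^ j * exp (of_int k * t))"

definition exp_poly_deriv0 :: "exp_poly \<Rightarrow> nat \<Rightarrow> int" where
  "exp_poly_deriv0 ps n =
     (\<Sum>(a, j, k)\<leftarrow>ps. if j \<le> n then a * k ^ (n - j) * falling_fact (int n) j else 0)"

lemma sums_monomial_exp:
  fixes a k :: int and t :: real
  shows "(\<lambda>n. of_int (if j \<le> n then a * k ^ (n - j) * falling_fact (int n) j else 0)
             / fact n * t ^ n) sums (of_int a * t ^ j * exp (of_int k * t))"
proof -
  have "real_of_int (falling_fact (int (i + j)) j) * fact i = fact (i + j)" for i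
    using arg_cong[OF falling_fact_of_nat_mult_fact[of j "i + j"], of real_of_int] by simp
  then have falling_fact_real: "real_of_int (falling_fact (int i + int j) j) = fact (i + j) / fact i" for i
    by (simp add: eq_divide_eq)
  have "(\<lambda>i. (of_int a * t ^ j) * ((of_int k * t) ^ i /\<^sub>R fact i)) sums (of_int a * t ^ j * exp (of_int k * t))"
    by (intro sums_mult exp_converges)
  then have "(\<lambda>i. of_int (if j \<le> i + j then a * k ^ (i + j - j) * falling_fact (int (i + j)) j else 0)
      / fact (i + j) * t ^ (i + j)) sums (of_int a * t ^ j * exp (of_int k * t))"
    by (simp add: falling_fact_real power_mult_distrib power_add field_simps)
  then show ?thesis
    by (subst (asm) sums_zero_iff_shift) auto
qed

lemma sums_eval_exp_poly:
  "(\<lambda>n. exp_poly_deriv0 ps n / fact n * t ^ n) sums eval_exp_poly ps t"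
proof (induction ps)
  case Nil
  then show ?case by (simp add: eval_exp_poly_def exp_poly_deriv0_def)
next
  case (Cons p ps)
  obtain a j k where p: "p = (a, j, k)" by (cases p)
  from sums_add[OF sums_monomial_exp Cons] show ?case
    by (simp add: p eval_exp_poly_def exp_poly_deriv0_def add_divide_distrib distrib_right)
qed

lemma eval_exp_poly_even_part_pos:
  assumes nonneg: "\<And>n. even n \<Longrightarrow> 0 \<le> exp_poly_deriv0 ps n"
    and pos: "even m" "0 < exp_poly_deriv0 ps m" and "t \<noteq> 0"
  shows "0 < eval_exp_poly ps t + eval_exp_poly ps (-t)"
proof -
  define c where "c n = exp_poly_deriv0 ps n / fact n" for n
  have sums: "(\<lambda>n. c n * t ^ n + c n * (-t) ^ n) sums (eval_exp_poly ps t + eval_exp_poly ps (-t))"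
    unfolding c_def by (intro sums_add sums_eval_exp_poly)
  have "0 \<le> c n * t ^ n + c n * (-t) ^ n" for n
    using nonneg[of n] by (cases "even n") (auto simp: c_def zero_le_even_power)
  moreover have "0 < c m * t ^ m + c m * (-t) ^ m"
    using pos \<open>t \<noteq> 0\<close> by (simp add: c_def zero_less_power_eq)
  ultimately have "0 < (\<Sum>n. c n * t ^ n + c n * (-t) ^ n)"
    by (intro suminf_pos2[OF sums_summable[OF sums]])
  with sums show ?thesis
    by (simp add: sums_iff)
qed

lemma abs_exp_poly_deriv0_le:
  "\<bar>exp_poly_deriv0 ps n\<bar> \<le> (\<Sum>(a, j, k)\<leftarrow>ps. \<bar>a\<bar> * \<bar>k\<bar> ^ (n - j) * int n ^ j)"
proof (induction ps)
  case Nil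
  then show ?case by (simp add: exp_poly_deriv0_def)
next
  case (Cons p ps)
  obtain a j k where p: "p = (a, j, k)" by (cases p)
  define d where "d = (if j \<le> n then a * k ^ (n - j) * falling_fact (int n) j else 0)"
  have "\<bar>d\<bar> \<le> \<bar>a\<bar> * \<bar>k\<bar> ^ (n - j) * int n ^ j"
    using falling_fact_of_nat_bounds[of j n] by (auto simp: d_def abs_mult power_abs intro!: mult_left_mono)
  moreover have "exp_poly_deriv0 (p # ps) n = d + exp_poly_deriv0 ps n"
    by (simp add: p d_def exp_poly_deriv0_def)
  moreover have "(\<Sum>(a, j, k)\<leftarrow>p # ps. \<bar>a\<bar> * \<bar>k\<bar> ^ (n - j) * int n ^ j)
      = \<bar>a\<bar> * \<bar>k\<bar> ^ (n - j) * int n ^ j + (\<Sum>(a, j, k)\<leftarrow>ps. \<bar>a\<bar> * \<bar>k\<bar> ^ (n - j) * int n ^ j)"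
    by (simp add: p)
  ultimately show ?case
    using Cons.IH abs_triangle_ineq[of d "exp_poly_deriv0 ps n"] by linarith
qed

lemma tail_term_ratio_le:
  fixes k B :: int
  assumes "0 < N" "N \<le> n" "j \<le> N" and ratio: "(int N + 1) ^ j * \<bar>k\<bar> \<le> B * int N ^ j"
  shows "\<bar>k\<bar> ^ (n - j) * int n ^ j * B ^ N \<le> \<bar>k\<bar> ^ (N - j) * int N ^ j * B ^ n"
  using \<open>N \<le> n\<close>
proof (induction n rule: dec_induct)
  case base
  then show ?case by (simp add: mult_ac)
next
  case (step n)
  have "0 \<le> B * int N ^ j"
    using ratio by (rule order_trans[rotated]) simp
  moreover have "0 < int N ^ j"
    using \<open>0 < N\<close> by simp
  ultimately have "B \<ge> 0"
    by (auto simp: zero_le_mult_iff)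
  have "(int n + 1) ^ j * int N ^ j \<le> int n ^ j * (int N + 1) ^ j"
    unfolding power_mult_distrib[symmetric] using step(1)
    by (intro power_mono) (auto simp: algebra_simps)
  from mult_right_mono[OF this abs_ge_zero[of k]]
  have "(int n + 1) ^ j * \<bar>k\<bar> * int N ^ j \<le> int n ^ j * ((int N + 1) ^ j * \<bar>k\<bar>)"
    by (simp add: mult_ac)
  also have "\<dots> \<le> int n ^ j * (B * int N ^ j)"
    using ratio by (rule mult_left_mono) simp
  also have "\<dots> = int n ^ j * B * int N ^ j"
    by (simp add: mult_ac)
  finally have next_term: "(int n + 1) ^ j * \<bar>k\<bar> \<le> int n ^ j * B"
    using \<open>0 < N\<close> by simp
  have "\<bar>k\<bar> ^ (Suc n - j) * int (Suc n) ^ j * B ^ N = \<bar>k\<bar> ^ (n - j) * B ^ N * ((int n + 1) ^ j * \<bar>k\<bar>)"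
    using \<open>j \<le> N\<close> step(1) by (simp add: Suc_diff_le mult_ac add.commute)
  also have "\<dots> \<le> \<bar>k\<bar> ^ (n - j) * B ^ N * (int n ^ j * B)"
    using next_term \<open>B \<ge> 0\<close> by (intro mult_left_mono) auto
  also have "\<dots> = B * (\<bar>k\<bar> ^ (n - j) * int n ^ j * B ^ N)"
    by (simp add: mult_ac)
  also have "\<dots> \<le> B * (\<bar>k\<bar> ^ (N - j) * int N ^ j * B ^ n)"
    using step.IH \<open>B \<ge> 0\<close> by (intro mult_left_mono)
  finally show ?case
    by (simp add: mult_ac)
qed

lemma exp_poly_deriv0_filter_split:
  "exp_poly_deriv0 ps n = exp_poly_deriv0 (filter P ps) n + exp_poly_deriv0 (filter (Not \<circ> P) ps) n"
  by (induction ps) (auto simp: exp_poly_deriv0_def)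

lemma exp_poly_deriv0_nonneg_dominated:
  fixes B :: int
  assumes tail: "\<forall>(a, j, k)\<in>set (filter (Not \<circ> P) ps). j \<le> N \<and> (int N + 1) ^ j * \<bar>k\<bar> \<le> B * int N ^ j"
    and tail_sum: "(\<Sum>(a, j, k)\<leftarrow>filter (Not \<circ> P) ps. \<bar>a\<bar> * \<bar>k\<bar> ^ (N - j) * int N ^ j) \<le> B ^ N"
    and "0 < N" "0 < B" "N \<le> n"
    and head: "B ^ n \<le> exp_poly_deriv0 (filter P ps) n"
  shows "0 \<le> exp_poly_deriv0 ps n"
proof -
  define qs where "qs = filter (Not \<circ> P) ps"
  have "(\<Sum>(a, j, k)\<leftarrow>qs. \<bar>a\<bar> * \<bar>k\<bar> ^ (n - j) * int n ^ j) * B ^ N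
      = (\<Sum>(a, j, k)\<leftarrow>qs. \<bar>a\<bar> * (\<bar>k\<bar> ^ (n - j) * int n ^ j * B ^ N))"
    by (induction qs) (auto simp: algebra_simps)
  also have "\<dots> \<le> (\<Sum>(a, j, k)\<leftarrow>qs. \<bar>a\<bar> * (\<bar>k\<bar> ^ (N - j) * int N ^ j * B ^ n))"
    using tail tail_term_ratio_le[OF \<open>0 < N\<close> \<open>N \<le> n\<close>]
    by (intro sum_list_mono) (auto simp: qs_def intro!: mult_left_mono)
  also have "\<dots> = (\<Sum>(a, j, k)\<leftarrow>qs. \<bar>a\<bar> * \<bar>k\<bar> ^ (N - j) * int N ^ j) * B ^ n"
    by (induction qs) (auto simp: algebra_simps)
  also have "\<dots> \<le> B ^ N * B ^ n"
    using tail_sum \<open>0 < B\<close> by (intro mult_right_mono) (auto simp: qs_def)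
  finally have "\<bar>exp_poly_deriv0 qs n\<bar> \<le> B ^ n"
    using abs_exp_poly_deriv0_le[of qs n] \<open>0 < B\<close> by (simp add: mult.commute)
  moreover have "exp_poly_deriv0 ps n = exp_poly_deriv0 (filter P ps) n + exp_poly_deriv0 qs n"
    unfolding qs_def by (rule exp_poly_deriv0_filter_split)
  ultimately show ?thesis
    using head by linarith
qed

text \<open>
  A certificate, decidable by evaluation, that all derivatives of even order at 0 are nonnegative
  once the terms selected by P are known to contribute at least B^n from order N on.
\<close>

definition exp_poly_nonneg_certificate :: "exp_poly \<Rightarrow> (int \<times> nat \<times> int \<Rightarrow> bool) \<Rightarrow> nat \<Rightarrow> int \<Rightarrow> bool" where
  "exp_poly_nonneg_certificate ps P N B \<longleftrightarrow>
     list_all (\<lambda>n. even n \<longrightarrow> 0 \<le> exp_poly_deriv0 ps n) [0..<N] \<and>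
     (\<forall>(a, j, k)\<in>set (filter (Not \<circ> P) ps). j \<le> N \<and> (int N + 1) ^ j * \<bar>k\<bar> \<le> B * int N ^ j) \<and>
     (\<Sum>(a, j, k)\<leftarrow>filter (Not \<circ> P) ps. \<bar>a\<bar> * \<bar>k\<bar> ^ (N - j) * int N ^ j) \<le> B ^ N"

lemma exp_poly_deriv0_even_nonneg:
  assumes "exp_poly_nonneg_certificate ps P N B" "0 < N" "0 < B"
    and head: "\<And>n. N \<le> n \<Longrightarrow> even n \<Longrightarrow> B ^ n \<le> exp_poly_deriv0 (filter P ps) n"
    and "even n"
  shows "0 \<le> exp_poly_deriv0 ps n"
  using assms exp_poly_deriv0_nonneg_dominated[of P ps N B n]
  by (cases "n < N") (auto simp: exp_poly_nonneg_certificate_def list_all_iff)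

lemma eval_exp_poly_Nil [simp]: "eval_exp_poly [] t = 0"
  by (simp add: eval_exp_poly_def)

lemma eval_exp_poly_Cons [simp]:
  "eval_exp_poly ((a, j, k) # ps) t = of_int a * t ^ j * exp (of_int k * t) + eval_exp_poly ps t"
  by (simp add: eval_exp_poly_def)

lemma eval_exp_poly_append [simp]: "eval_exp_poly (ps @ qs) t = eval_exp_poly ps t + eval_exp_poly qs t"
  by (simp add: eval_exp_poly_def)

definition exp_poly_smult :: "int \<Rightarrow> exp_poly \<Rightarrow> exp_poly" where
  "exp_poly_smult c ps = map (\<lambda>(a, j, k). (c * a, j, k)) ps"

lemma eval_exp_poly_smult [simp]: "eval_exp_poly (exp_poly_smult c ps) t = of_int c * eval_exp_poly ps t"
  by (induction ps) (auto simp: exp_poly_smult_def algebra_simps)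

definition exp_poly_mult :: "exp_poly \<Rightarrow> exp_poly \<Rightarrow> exp_poly" where
  "exp_poly_mult ps qs = [(a * b, j + i, k + l). (a, j, k) \<leftarrow> ps, (b, i, l) \<leftarrow> qs]"

lemma eval_exp_poly_mult [simp]:
  "eval_exp_poly (exp_poly_mult ps qs) t = eval_exp_poly ps t * eval_exp_poly qs t"
proof -
  have "eval_exp_poly [(a * b, j + i, k + l). (b, i, l) \<leftarrow> qs] t
      = of_int a * t ^ j * exp (of_int k * t) * eval_exp_poly qs t" for a j k
    by (induction qs) (auto simp: algebra_simps power_add exp_add)
  then show ?thesis
    by (induction ps) (auto simp: exp_poly_mult_def algebra_simps)
qed

fun exp_poly_add_term :: "int \<times> nat \<times> int \<Rightarrow> exp_poly \<Rightarrow> exp_poly" where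
  "exp_poly_add_term p [] = [p]"
| "exp_poly_add_term (a, j, k) ((b, i, l) # ps) =
     (if j = i \<and> k = l then (a + b, i, l) # ps else (b, i, l) # exp_poly_add_term (a, j, k) ps)"

lemma eval_exp_poly_add_term [simp]:
  "eval_exp_poly (exp_poly_add_term (a, j, k) ps) t = of_int a * t ^ j * exp (of_int k * t) + eval_exp_poly ps t"
  by (induction ps) (auto simp: algebra_simps)

definition exp_poly_normalize :: "exp_poly \<Rightarrow> exp_poly" where
  "exp_poly_normalize ps = filter (\<lambda>(a, j, k). a \<noteq> 0) (foldr exp_poly_add_term ps [])"

lemma eval_exp_poly_normalize [simp]: "eval_exp_poly (exp_poly_normalize ps) t = eval_exp_poly ps t"
proof -
  have "eval_exp_poly (filter (\<lambda>(a, j, k). a \<noteq> 0) qs) t = eval_exp_poly qs t" for qs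
    by (induction qs) auto
  moreover have "eval_exp_poly (foldr exp_poly_add_term ps []) t = eval_exp_poly ps t"
    by (induction ps) auto
  ultimately show ?thesis
    by (simp add: exp_poly_normalize_def)
qed

fun exp_poly_power :: "exp_poly \<Rightarrow> nat \<Rightarrow> exp_poly" where
  "exp_poly_power ps 0 = [(1, 0, 0)]"
| "exp_poly_power ps (Suc n) = exp_poly_normalize (exp_poly_mult ps (exp_poly_power ps n))"

lemma eval_exp_poly_power [simp]: "eval_exp_poly (exp_poly_power ps n) t = eval_exp_poly ps t ^ n"
  by (induction n) auto

definition two_sinh_exp_poly :: exp_poly where
  "two_sinh_exp_poly = [(1, 0, 1), (-1, 0, -1)]"

definition two_cosh_exp_poly :: exp_poly where
  "two_cosh_exp_poly = [(1, 0, 1), (1, 0, -1)]"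

definition id_exp_poly :: exp_poly where
  "id_exp_poly = [(1, 1, 0)]"

lemma eval_two_sinh_exp_poly [simp]: "eval_exp_poly two_sinh_exp_poly t = 2 * sinh t"
  by (simp add: two_sinh_exp_poly_def sinh_def exp_minus)

lemma eval_two_cosh_exp_poly [simp]: "eval_exp_poly two_cosh_exp_poly t = 2 * cosh t"
  by (simp add: two_cosh_exp_poly_def cosh_def exp_minus)

lemma eval_id_exp_poly [simp]: "eval_exp_poly id_exp_poly t = t"
  by (simp add: id_exp_poly_def)

definition lazarevic_exp_poly :: exp_poly where
  "lazarevic_exp_poly = exp_poly_normalize
     (exp_poly_mult id_exp_poly (exp_poly_power two_sinh_exp_poly 3)
      @ exp_poly_smult (-4) (exp_poly_mult (exp_poly_power id_exp_poly 4) two_cosh_exp_poly))"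

lemma eval_lazarevic_exp_poly:
  "eval_exp_poly lazarevic_exp_poly t = 8 * (t * sinh t ^ 3 - t ^ 4 * cosh t)"
  by (simp add: lazarevic_exp_poly_def algebra_simps)

lemma lazarevic_exp_poly_deriv0_nonneg:
  assumes "even n"
  shows "0 \<le> exp_poly_deriv0 lazarevic_exp_poly n"
proof (rule exp_poly_deriv0_even_nonneg)
  let ?P = "\<lambda>(a :: int, j :: nat, k :: int). \<bar>k\<bar> = 3"
  show "exp_poly_nonneg_certificate lazarevic_exp_poly ?P 12 3"
    by code_simp
  have head: "filter ?P lazarevic_exp_poly = [(1, 1, 3), (-1, 1, -3)]"
    by code_simp
  fix m :: nat
  assume "12 \<le> m" "even m"
  then have "(3::int) ^ m \<le> 2 * int m * 3 ^ (m - 1)"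
    by (cases m) auto
  also have "\<dots> = exp_poly_deriv0 (filter ?P lazarevic_exp_poly) m"
    using \<open>12 \<le> m\<close> \<open>even m\<close> by (cases m) (auto simp: head exp_poly_deriv0_def)
  finally show "3 ^ m \<le> exp_poly_deriv0 (filter ?P lazarevic_exp_poly) m" .
qed (use assms in simp_all)

lemma lazarevic_inequality:
  fixes x :: real
  assumes "0 < x"
  shows "x ^ 3 * cosh x < sinh x ^ 3"
proof -
  have "exp_poly_deriv0 lazarevic_exp_poly 8 > 0"
    by code_simp
  then have "0 < eval_exp_poly lazarevic_exp_poly x + eval_exp_poly lazarevic_exp_poly (-x)"
    using \<open>0 < x\<close> by (intro eval_exp_poly_even_part_pos lazarevic_exp_poly_deriv0_nonneg) auto
  then have "0 < x * (sinh x ^ 3 - x ^ 3 * cosh x)"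
    by (simp add: eval_lazarevic_exp_poly algebra_simps eval_nat_numeral)
  with \<open>0 < x\<close> show ?thesis
    by (simp add: zero_less_mult_iff)
qed

definition quintic_exp_poly :: exp_poly where
  "quintic_exp_poly = exp_poly_normalize
     (exp_poly_mult (exp_poly_power (two_sinh_exp_poly @ exp_poly_smult (-2) id_exp_poly) 5)
                    (exp_poly_power two_sinh_exp_poly 3)
      @ exp_poly_smult (-8) (exp_poly_mult (exp_poly_power id_exp_poly 3)
          (exp_poly_power (exp_poly_smult 2 id_exp_poly @ exp_poly_mult id_exp_poly two_cosh_exp_poly
                           @ exp_poly_smult (-2) two_sinh_exp_poly) 5)))"

lemma eval_quintic_exp_poly:
  "eval_exp_poly quintic_exp_poly t
     = 256 * ((sinh t - t) ^ 5 * sinh t ^ 3 - t ^ 3 * (t + t * cosh t - 2 * sinh t) ^ 5)"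
  unfolding quintic_exp_poly_def eval_exp_poly_normalize eval_exp_poly_append eval_exp_poly_mult
    eval_exp_poly_power eval_exp_poly_smult eval_two_sinh_exp_poly eval_id_exp_poly
    eval_two_cosh_exp_poly of_int_minus of_int_numeral
  by algebra

lemma quintic_exp_poly_deriv0_nonneg:
  assumes "even n"
  shows "0 \<le> exp_poly_deriv0 quintic_exp_poly n"
proof (rule exp_poly_deriv0_even_nonneg)
  let ?P = "\<lambda>(a :: int, j :: nat, k :: int). \<bar>k\<bar> = 8"
  show "exp_poly_nonneg_certificate quintic_exp_poly ?P 48 8"
    by code_simp
  have head: "filter ?P quintic_exp_poly = [(1, 0, 8), (1, 0, -8)]"
    by code_simp
  fix m :: nat
  assume "even m"
  then show "8 ^ m \<le> exp_poly_deriv0 (filter ?P quintic_exp_poly) m"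
    by (simp add: head exp_poly_deriv0_def)
qed (use assms in simp_all)

lemma sinh_cosh_quintic_inequality:
  fixes x :: real
  assumes "0 < x"
  shows "32 * x ^ 3 * cosh x ^ 2 * (x * cosh x - sinh x) ^ 5 < (sinh x * cosh x - x) ^ 5 * sinh x ^ 3"
proof -
  define f where "f t = (sinh t - t) ^ 5 * sinh t ^ 3 - t ^ 3 * (t + t * cosh t - 2 * sinh t) ^ 5" for t :: real
  have "exp_poly_deriv0 quintic_exp_poly 22 > 0"
    by code_simp
  then have "0 < eval_exp_poly quintic_exp_poly (2 * x) + eval_exp_poly quintic_exp_poly (- (2 * x))"
    using \<open>0 < x\<close> by (intro eval_exp_poly_even_part_pos quintic_exp_poly_deriv0_nonneg) auto
  moreover have "f (- t) = f t" for t
  proof -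
    have odd_powers: "(- u) ^ 5 * (- v) ^ 3 - (- w) ^ 3 * (- z) ^ 5 = u ^ 5 * v ^ 3 - w ^ 3 * z ^ 5"
      for u v w z :: real
      by (simp add: power_minus_odd)
    have negate: "sinh (- t) - - t = - (sinh t - t)"
      "- t + - t * cosh (- t) - 2 * sinh (- t) = - (t + t * cosh t - 2 * sinh t)"
      by simp_all
    show ?thesis
      unfolding f_def negate by (simp only: sinh_minus odd_powers)
  qed
  moreover have "eval_exp_poly quintic_exp_poly t = 256 * f t" for t
    by (simp only: eval_quintic_exp_poly f_def)
  ultimately have "0 < f (2 * x)"
    by simp
  also have "f (2 * x) = 256 * cosh x ^ 3 *
      ((sinh x * cosh x - x) ^ 5 * sinh x ^ 3 - 32 * x ^ 3 * cosh x ^ 2 * (x * cosh x - sinh x) ^ 5)"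
    unfolding f_def sinh_double cosh_double_cosh by algebra
  finally show ?thesis
    using cosh_real_pos[of x] by (auto simp: zero_less_mult_iff)
qed

lemma sinh_gt_self:
  fixes x :: real
  assumes "0 < x"
  shows "x < sinh x"
proof -
  have "(\<lambda>y. sinh y - y) 0 < (\<lambda>y. sinh y - y) x"
  proof (rule DERIV_pos_imp_increasing_open[OF assms])
    fix y :: real
    assume "0 < y" "y < x"
    then have "1 < cosh y"
      using cosh_real_nonneg_less_iff[of 0 y] by simp
    then show "\<exists>d. ((\<lambda>y. sinh y - y) has_real_derivative d) (at y) \<and> 0 < d"
      by (intro exI[of _ "cosh y - 1"]) (auto intro!: derivative_eq_intros)
  qed (auto intro!: continuous_intros)
  then show ?thesis
    by simp
qed

lemma x_lt_sinh_mult_cosh: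
  fixes x :: real
  assumes "0 < x"
  shows "x < sinh x * cosh x"
  using sinh_gt_self[of "2 * x"] assms by (simp add: sinh_double)

definition sinh_tanh_sum :: "real \<Rightarrow> real \<Rightarrow> real" where
  "sinh_tanh_sum p x = (sinh x / x) powr (2 * p) + (tanh x / x) powr p"

lemma sinh_tanh_sum_has_real_derivative:
  fixes x :: real
  assumes "0 < x"
  shows "(sinh_tanh_sum p has_real_derivative
            2 * p * (sinh x / x) powr (2 * p) * ((x * cosh x - sinh x) / (x * sinh x))
            - p * (tanh x / x) powr p * ((sinh x * cosh x - x) / (x * sinh x * cosh x))) (at x)"
proof -
  have "((\<lambda>y. sinh y / y) has_real_derivative (x * cosh x - sinh x) / x\<^sup>2) (at x)"
    using assms by (auto intro!: derivative_eq_intros simp: power2_eq_square field_simps)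
  from DERIV_powr[OF this _ DERIV_const, of "2 * p"]
  have "((\<lambda>y. (sinh y / y) powr (2 * p)) has_real_derivative
          (sinh x / x) powr (2 * p) * ((x * cosh x - sinh x) / x\<^sup>2 * (2 * p) / (sinh x / x))) (at x)"
    using assms by simp
  moreover have "((\<lambda>y. tanh y / y) has_real_derivative (x - sinh x * cosh x) / (x\<^sup>2 * cosh x ^ 2)) (at x)"
    unfolding tanh_def using assms cosh_square_eq[of x]
    by (auto intro!: derivative_eq_intros simp: power2_eq_square field_simps)
  from DERIV_powr[OF this _ DERIV_const, of p]
  have "((\<lambda>y. (tanh y / y) powr p) has_real_derivative
          (tanh x / x) powr p * ((x - sinh x * cosh x) / (x\<^sup>2 * cosh x ^ 2) * p / (tanh x / x))) (at x)"
    using assms by simp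
  ultimately show ?thesis
    unfolding sinh_tanh_sum_def
    by (rule DERIV_add[THEN DERIV_cong]) (use assms in \<open>simp add: tanh_def field_simps power2_eq_square\<close>)
qed

lemma critical_derivative_terms_less:
  fixes x :: real
  assumes "0 < x"
  shows "6/5 * (sinh x / x) powr (-6/5) * ((x * cosh x - sinh x) / (x * sinh x))
           < 3/5 * (tanh x / x) powr (-3/5) * ((sinh x * cosh x - x) / (x * sinh x * cosh x))"
proof -
  define s c where "s = sinh x" and "c = cosh x"
  define y z where "y = x * c - s" and "z = s * c - x"
  define e1 e2 where "e1 = (s / x) powr (-6/5)" and "e2 = (s / (c * x)) powr (-3/5)"
  have "0 < s" "0 < c"
    using assms by (simp_all add: s_def c_def)
  have "0 < z"
    using x_lt_sinh_mult_cosh[OF assms] by (simp add: z_def s_def c_def)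
  have "0 < e2"
    using \<open>0 < s\<close> \<open>0 < c\<close> assms by (simp add: e2_def)
  have "e1 ^ 5 = (s / x) powr (real 5 * (-6/5))"
    unfolding e1_def using \<open>0 < s\<close> assms by (intro powr_power) simp
  also have "\<dots> = (x / s) ^ 6"
    using \<open>0 < s\<close> assms by (simp add: powr_minus power_divide)
  finally have e1_pow: "e1 ^ 5 * s ^ 6 = x ^ 6"
    using \<open>0 < s\<close> by (simp add: power_divide)
  have "e2 ^ 5 = (s / (c * x)) powr (real 5 * (-3/5))"
    unfolding e2_def using \<open>0 < s\<close> \<open>0 < c\<close> assms by (intro powr_power) simp
  also have "\<dots> = (c * x / s) ^ 3"
    using \<open>0 < s\<close> \<open>0 < c\<close> assms by (simp add: powr_minus power_divide)
  finally have e2_pow: "e2 ^ 5 * s ^ 3 = c ^ 3 * x ^ 3"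
    using \<open>0 < s\<close> by (simp add: power_divide power_mult_distrib)
  have lhs: "(2 * c * e1 * y) ^ 5 * s ^ 6 = x ^ 3 * c ^ 3 * (32 * x ^ 3 * c ^ 2 * y ^ 5)"
  proof -
    have "(2 * c * e1 * y) ^ 5 * s ^ 6 = 32 * c ^ 5 * y ^ 5 * (e1 ^ 5 * s ^ 6)"
      by (simp add: power_mult_distrib mult_ac)
    also have "\<dots> = x ^ 3 * c ^ 3 * (32 * x ^ 3 * c ^ 2 * y ^ 5)"
      unfolding e1_pow by (simp add: mult_ac flip: power_add)
    finally show ?thesis .
  qed
  have rhs: "(e2 * z) ^ 5 * s ^ 6 = x ^ 3 * c ^ 3 * (z ^ 5 * s ^ 3)"
  proof -
    have "(e2 * z) ^ 5 * s ^ 6 = z ^ 5 * s ^ 3 * (e2 ^ 5 * s ^ 3)"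
      by (simp add: power_mult_distrib mult_ac flip: power_add)
    also have "\<dots> = x ^ 3 * c ^ 3 * (z ^ 5 * s ^ 3)"
      unfolding e2_pow by (simp add: mult_ac)
    finally show ?thesis .
  qed
  have "32 * x ^ 3 * c ^ 2 * y ^ 5 < z ^ 5 * s ^ 3"
    using sinh_cosh_quintic_inequality[OF assms] by (simp only: s_def c_def y_def z_def)
  then have "(2 * c * e1 * y) ^ 5 * s ^ 6 < (e2 * z) ^ 5 * s ^ 6"
    unfolding lhs rhs using \<open>0 < c\<close> assms by (intro mult_strict_left_mono) auto
  then have "(2 * c * e1 * y) ^ 5 < (e2 * z) ^ 5"
    by (rule mult_right_less_imp_less) simp
  then have "2 * c * e1 * y < e2 * z"
    by (rule power_less_imp_less_base) (use \<open>0 < e2\<close> \<open>0 < z\<close> in simp)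
  then have "6/5 * e1 * (y / (x * s)) < 3/5 * e2 * (z / (x * s * c))"
    using \<open>0 < s\<close> \<open>0 < c\<close> assms by (simp add: field_simps)
  then show ?thesis
    by (simp add: y_def z_def s_def c_def e1_def e2_def tanh_def mult.commute)
qed

lemma sinh_tanh_sum_critical_strict_mono:
  assumes "0 < a" "a < b"
  shows "sinh_tanh_sum (-3/5) a < sinh_tanh_sum (-3/5) b"
  using \<open>a < b\<close>
proof (rule DERIV_pos_imp_increasing)
  fix x
  assume "a \<le> x" "x \<le> b"
  with \<open>0 < a\<close> have "0 < x"
    by simp
  from sinh_tanh_sum_has_real_derivative[OF this] critical_derivative_terms_less[OF this]
  show "\<exists>d. (sinh_tanh_sum (-3/5) has_real_derivative d) (at x) \<and> 0 < d"
    by (intro exI conjI) auto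
qed

lemma sinh_tanh_sum_tendsto_2: "(sinh_tanh_sum p \<longlongrightarrow> 2) (at_right 0)"
  unfolding sinh_tanh_sum_def by real_asymp

lemma sinh_tanh_sum_critical_gt_2:
  assumes "0 < x"
  shows "2 < sinh_tanh_sum (-3/5) x"
proof -
  have "2 \<le> sinh_tanh_sum (-3/5) (x / 2)"
  proof (rule tendsto_upperbound[OF sinh_tanh_sum_tendsto_2])
    show "\<forall>\<^sub>F y in at_right 0. sinh_tanh_sum (-3/5) y \<le> sinh_tanh_sum (-3/5) (x / 2)"
      unfolding eventually_at_right_field
    proof (intro exI[of _ "x / 2"] conjI allI impI)
      fix y :: real
      assume "0 < y" "y < x / 2"
      then show "sinh_tanh_sum (-3/5) y \<le> sinh_tanh_sum (-3/5) (x / 2)"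
        by (intro less_imp_le sinh_tanh_sum_critical_strict_mono)
    qed (use assms in simp)
  qed simp
  also have "\<dots> < sinh_tanh_sum (-3/5) x"
    using assms by (intro sinh_tanh_sum_critical_strict_mono) auto
  finally show ?thesis .
qed

lemma powr_le_affine:
  fixes u l :: real
  assumes "0 < u" "0 \<le> l" "l \<le> 1"
  shows "u powr l \<le> l * u + (1 - l)"
  using Youngs_inequality_0[of l "1 - l" u 1] assms by simp

lemma sinh_tanh_sum_gt_2_of_le:
  assumes "p \<le> -3/5" "0 < x"
  shows "2 < sinh_tanh_sum p x"
proof -
  define u v where "u = (sinh x / x) powr (2 * p)" and "v = (tanh x / x) powr p"
  define l where "l = (-3/5) / p"
  have "0 < l" "l \<le> 1"
    using assms(1) by (simp_all add: l_def divide_simps)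
  have "0 < sinh x / x" "0 < tanh x / x"
    using \<open>0 < x\<close> by simp_all
  then have "sinh_tanh_sum (-3/5) x = u powr l + v powr l"
    using assms(1) by (simp add: sinh_tanh_sum_def u_def v_def l_def powr_powr)
  also have "\<dots> \<le> (l * u + (1 - l)) + (l * v + (1 - l))"
    using \<open>0 < x\<close> \<open>0 < l\<close> \<open>l \<le> 1\<close>
    by (intro add_mono powr_le_affine) (simp_all add: u_def v_def)
  finally have "l * 2 < l * (u + v)"
    using sinh_tanh_sum_critical_gt_2[OF \<open>0 < x\<close>] by (simp add: algebra_simps)
  with \<open>0 < l\<close> have "2 < u + v"
    by simp
  then show ?thesis
    by (simp add: sinh_tanh_sum_def u_def v_def)
qed

lemma sinh_tanh_sum_gt_2_of_pos:
  assumes "0 < p" "0 < x"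
  shows "2 < sinh_tanh_sum p x"
proof -
  define w where "w = (tanh x / x) powr p"
  have "0 < tanh x / x" "0 < sinh x / x"
    using \<open>0 < x\<close> by simp_all
  then have "0 < w"
    using \<open>0 < x\<close> by (simp add: w_def)
  have "x / tanh x < (sinh x / x) ^ 2"
    using lazarevic_inequality[OF \<open>0 < x\<close>] \<open>0 < x\<close>
    by (simp add: tanh_def field_simps power2_eq_square power3_eq_cube)
  then have "(x / tanh x) powr p < ((sinh x / x) ^ 2) powr p"
    using \<open>0 < p\<close> \<open>0 < x\<close> by (intro powr_less_mono2) simp_all
  also have "(x / tanh x) powr p = 1 / w"
    using \<open>0 < x\<close> by (simp add: w_def powr_divide)
  also have "((sinh x / x) ^ 2) powr p = (sinh x / x) powr (2 * p)"
    using \<open>0 < sinh x / x\<close> by (simp add: powr_powr flip: powr_numeral)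
  finally have "1 / w + w < sinh_tanh_sum p x"
    by (simp add: sinh_tanh_sum_def w_def)
  moreover have "2 \<le> 1 / w + w"
    using \<open>0 < w\<close> sum_squares_ge_zero[of "w - 1" 0] by (simp add: field_simps power2_eq_square)
  ultimately show ?thesis
    by linarith
qed

lemma sinh_tanh_sum_expansion:
  "((\<lambda>x. (sinh_tanh_sum p x - 2) / x ^ 4) \<longlongrightarrow> p * (3 + 5 * p) / 45) (at_right 0)"
  unfolding sinh_tanh_sum_def by (real_asymp simp: field_simps)

lemma sinh_tanh_sum_lt_2_near_0:
  assumes "-3/5 < p" "p < 0"
  shows "\<exists>x>0. sinh_tanh_sum p x < 2"
proof -
  have "p * (3 + 5 * p) / 45 < 0"
    using assms by (simp add: mult_neg_pos)
  with sinh_tanh_sum_expansion have "\<forall>\<^sub>F x in at_right 0. (sinh_tanh_sum p x - 2) / x ^ 4 < 0"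
    by (rule order_tendstoD)
  then have "\<forall>\<^sub>F x in at_right 0. 0 < x \<and> sinh_tanh_sum p x < 2"
    using eventually_at_right_less[of 0]
    by eventually_elim (simp add: divide_less_0_iff)
  then show ?thesis
    using eventually_happens[of _ "at_right (0::real)"] by auto
qed

theorem proposition4p7:
  fixes p :: real
  assumes "p \<noteq> 0"
  shows "(\<forall>x::real. x > 0 \<longrightarrow>
            (sinh x / x) powr (2 * p) + (tanh x / x) powr p > 2)
         \<longleftrightarrow> (p > 0 \<or> p \<le> -3/5)"
proof -
  have "(\<forall>x>0. 2 < sinh_tanh_sum p x) \<longleftrightarrow> (p > 0 \<or> p \<le> -3/5)"
  proof
    assume "\<forall>x>0. 2 < sinh_tanh_sum p x"
    with sinh_tanh_sum_lt_2_near_0[of p] show "p > 0 \<or> p \<le> -3/5"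
      using assms by force
  next
    assume "p > 0 \<or> p \<le> -3/5"
    with sinh_tanh_sum_gt_2_of_pos sinh_tanh_sum_gt_2_of_le show "\<forall>x>0. 2 < sinh_tanh_sum p x"
      by blast
  qed
  then show ?thesis
    by (simp add: sinh_tanh_sum_def)
qed

end
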